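(* Let $A,B$ be complex $3\times 3$ matrices. The following are equivalent: (1) $A$ and $B$ have identical pseudospectra (i.e. $\|(zI-A)^{-1}\|=\|(zI-B)^{-1}\|$ for all $z\in\mathbb{C}$) and $\chi_A=\chi_B$; (2) $A$ and $B$ have super-identical pseudospectra, i.e. $s_k(zI-A)=s_k(zI-B)$ for all $z\in\mathbb{C}$ and $k=1,2,3$.
   Context: $\|\cdot\|$ is the spectral norm; by convention $\|(zI-T)^{-1}\|=\infty$ for $z$ an eigenvalue of $T$. $\chi_T(z)=\det(zI-T)$ is the characteristic polynomial. $s_1(T)\ge s_2(T)\ge s_3(T)$ are the singular values of $T$. *)

theory Defs
  imports "HOL-Analysis.Analysis" "HOL-Computational_Algebra.Computational_Algebra"
    "HOL-Library.Extended_Real"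
begin

type_synonym cmat3 = "complex ^ 3 ^ 3"

definition scalar_mat :: "complex \<Rightarrow> cmat3" where
  "scalar_mat z = (\<chi> i j. if i = j then z else 0)"

definition adjoint_mat :: "cmat3 \<Rightarrow> cmat3" where
  "adjoint_mat M = (\<chi> i j. cnj (M $ j $ i))"

definition char_poly3 :: "cmat3 \<Rightarrow> complex poly" where
  "char_poly3 T = det (\<chi> i j. (if i = j then [:0, 1:] else 0) - [:T $ i $ j:])"

definition spec_norm :: "cmat3 \<Rightarrow> real" where
  "spec_norm M = onorm (\<lambda>x. M *v x)"

definition resolvent_norm :: "cmat3 \<Rightarrow> complex \<Rightarrow> ereal" where
  "resolvent_norm T z =
     (if invertible (scalar_mat z - T) then ereal (spec_norm (matrix_inv (scalar_mat z - T)))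
      else \<infinity>)"

text \<open>Singular values s_1 \<ge> s_2 \<ge> s_3: nonnegative square roots of the eigenvalues of
  M^* M (counted with multiplicity, as roots of its characteristic polynomial),
  listed in decreasing order; singular_value M k is s_k(M) for k = 1,2,3.\<close>
definition singular_value :: "cmat3 \<Rightarrow> nat \<Rightarrow> real" where
  "singular_value M k =
     sqrt (rev (sorted_list_of_multiset
             (image_mset Re (proots (char_poly3 (adjoint_mat M ** M))))) ! (k - 1))"

end

theory Submission
  imports Defs
begin

(* For T = A, B write H_T(z) = (zI - T)^* (zI - T).  The roots of its characteristic
   polynomial x^3 - tr H x^2 + e2(H) x - det H are the s_k(zI - T)^2, and the resolvent
   norm is 1 / s_3(zI - T).  Hence (2) gives equal resolvent norms and, through
   det H_T = |chi_T(z)|^2, equal moduli of the monic polynomials chi_A and chi_B, which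
   forces chi_A = chi_B.
   Conversely, under (1) det H_A = det H_B, d = tr H_A - tr H_B = ||A||_F^2 - ||B||_F^2 is
   constant, and s_3^2 is a common root, so e2(H_A) - e2(H_B) = d s_3^2 off the spectrum.
   If d were nonzero, then on every line z = t w the function s_3(tw - A)^2 would be a
   polynomial in t lying between (|t| - ||A||)^2 and (|t| + ||A||)^2, hence equal to
   t^2 + c t + c'; comparing with ||(tw - A) x||^2 as t -> +-infinity shows that
   Re <w x, A x> / ||x||^2 is constant, so A, and likewise B, is scalar, and equal traces
   give A = B, contradicting d /= 0.  So d = 0, and e2(H_A) = e2(H_B) off a finite set,
   hence everywhere by continuity. *)

no_notation fps_nth (infixl \<open>$\<close> 75)

lemma linear_coeff_eq_0_if_quadratic_nonneg:
  fixes a b :: real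
  assumes "\<And>t. 0 \<le> 2 * t * a + t\<^sup>2 * b"
  shows "a = 0"
proof -
  have "((\<lambda>t. 2 * t * a + t\<^sup>2 * b) has_real_derivative 2 * a) (at 0)"
    by (auto intro!: derivative_eq_intros)
  then have "2 * a = 0"
    by (rule DERIV_local_min[of _ _ _ 1]) (use assms in force)+
  then show ?thesis by simp
qed

lemma eq_0_if_mult_bounded_above:
  fixes a b K :: real
  assumes "\<And>t. K < \<bar>t\<bar> \<Longrightarrow> t * a \<le> b"
  shows "a = 0"
proof (rule ccontr)
  assume "a \<noteq> 0"
  define t where "t = sgn a * (\<bar>K\<bar> + 1 + \<bar>b\<bar> / \<bar>a\<bar>)"
  have "\<bar>t\<bar> = \<bar>K\<bar> + 1 + \<bar>b\<bar> / \<bar>a\<bar>"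
    using \<open>a \<noteq> 0\<close> by (simp add: t_def abs_mult)
  then have "K < \<bar>t\<bar>"
    using divide_nonneg_nonneg[of "\<bar>b\<bar>" "\<bar>a\<bar>"] by linarith
  moreover have "b < t * a"
  proof -
    have "t * a = (\<bar>K\<bar> + 1) * \<bar>a\<bar> + \<bar>b\<bar>"
      using \<open>a \<noteq> 0\<close> by (simp add: t_def abs_if sgn_if field_simps)
    moreover have "0 < (\<bar>K\<bar> + 1) * \<bar>a\<bar>"
      using \<open>a \<noteq> 0\<close> by simp
    ultimately show ?thesis by linarith
  qed
  ultimately show False
    using assms[of t] by simp
qed

lemma degree_le_1_if_linear_bound:
  fixes p :: "real poly"
  assumes "\<And>t. T \<le> t \<Longrightarrow> \<bar>poly p t\<bar> \<le> C * t + C"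
  shows "degree p \<le> 1"
proof (rule ccontr)
  assume deg: "\<not> degree p \<le> 1"
  have "eventually (\<lambda>t. norm (poly p t / t ^ degree p) \<le> C / t + C / t\<^sup>2) at_top"
    using eventually_ge_at_top[of "max T 1"]
  proof (rule eventually_mono)
    fix t assume t: "max T 1 \<le> t"
    have "norm (poly p t / t ^ degree p) \<le> \<bar>poly p t\<bar> / t\<^sup>2"
      using t deg by (auto simp: abs_divide intro!: divide_left_mono power_increasing)
    also have "\<dots> \<le> (C * t + C) / t\<^sup>2"
      using t assms by (auto intro: divide_right_mono)
    also have "\<dots> = C / t + C / t\<^sup>2"
      using t by (simp add: field_simps power2_eq_square)
    finally show "norm (poly p t / t ^ degree p) \<le> C / t + C / t\<^sup>2" .
  qed
  moreover have "((\<lambda>t. C / t + C / t\<^sup>2) \<longlongrightarrow> 0) at_top"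
    by (intro tendsto_add_zero tendsto_divide_0[OF tendsto_const]
        filterlim_at_top_imp_at_infinity filterlim_ident filterlim_pow_at_top) auto
  ultimately have "((\<lambda>t. poly p t / t ^ degree p) \<longlongrightarrow> 0) at_top"
    by (rule Lim_null_comparison)
  moreover have "((\<lambda>t. poly p t / t ^ degree p) \<longlongrightarrow> lead_coeff p) at_top"
    by (rule tendsto_mono[OF at_top_le_at_infinity poly_divide_tendsto_aux])
  ultimately have "lead_coeff p = 0"
    by (intro tendsto_unique[OF trivial_limit_at_top_linorder])
  with deg show False by simp
qed

lemma poly_eq_if_degree_le_1:
  fixes p :: "'a::comm_semiring_1 poly"
  assumes "degree p \<le> 1"
  shows "poly p t = coeff p 0 + coeff p 1 * t"
proof -
  have "degree p = 0 \<or> degree p = 1"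
    using assms by linarith
  then show ?thesis
    by (elim disjE) (simp_all add: poly_altdef coeff_eq_0 mult.commute)
qed

lemma polynomial_function_imp_poly:
  fixes f :: "real \<Rightarrow> real"
  assumes "polynomial_function f"
  obtains p where "f = poly p"
proof -
  obtain a n where f: "f = (\<lambda>x. \<Sum>i\<le>n. a i * x ^ i)"
    using assms by (auto simp: real_polynomial_function_iff_sum simp flip: real_polynomial_function_eq)
  have "f = poly (\<Sum>i\<le>n. monom (a i) i)"
    by (simp add: f fun_eq_iff poly_sum poly_monom)
  then show ?thesis by (rule that)
qed

lemma polynomial_function_cnj:
  "polynomial_function f \<Longrightarrow> polynomial_function (\<lambda>x. cnj (f x))"
  using polynomial_function_compose[OF _ polynomial_function_bounded_linear[OF bounded_linear_cnj]]
  by (simp add: o_def)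

lemma polynomial_function_Re:
  "polynomial_function f \<Longrightarrow> polynomial_function (\<lambda>x. Re (f x))"
  using polynomial_function_compose[OF _ polynomial_function_bounded_linear[OF bounded_linear_Re]]
  by (simp add: o_def)

lemma polynomial_function_complex_mult:
  fixes f g :: "'a::real_normed_vector \<Rightarrow> complex"
  assumes f: "polynomial_function f" and g: "polynomial_function g"
  shows "polynomial_function (\<lambda>x. f x * g x)"
proof -
  have Im_f: "polynomial_function (\<lambda>x. Im (f x))"
    using polynomial_function_compose[OF f polynomial_function_bounded_linear[OF bounded_linear_Im]]
    by (simp add: o_def)
  have ig: "polynomial_function (\<lambda>x. \<i> * g x)"
    using polynomial_function_compose[OF g polynomial_function_bounded_linear[OF bounded_linear_mult_right]]
    by (simp add: o_def)
  have "polynomial_function (\<lambda>x. Re (f x) *\<^sub>R g x + Im (f x) *\<^sub>R (\<i> * g x))"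
    using f g Im_f ig by (intro polynomial_function_add polynomial_function_mult polynomial_function_Re)
  moreover have "Re (f x) *\<^sub>R g x + Im (f x) *\<^sub>R (\<i> * g x) = f x * g x" for x
    by (simp add: complex_eq_iff)
  ultimately show ?thesis by simp
qed

lemma continuous_eq_off_finite:
  fixes f g :: "'a::{perfect_space,t2_space} \<Rightarrow> 'b::t2_space"
  assumes "isCont f z" "isCont g z" "finite S" "\<And>w. w \<notin> S \<Longrightarrow> f w = g w"
  shows "f z = g z"
proof -
  have "eventually (\<lambda>w. w \<notin> S) (at z)"
    using islimpt_finite[OF assms(3)] by (simp add: islimpt_iff_eventually)
  then have "eventually (\<lambda>w. f w = g w) (at z)"
    by (rule eventually_mono) (rule assms(4))
  with assms(1) have "(g \<longlongrightarrow> f z) (at z)"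
    unfolding isCont_def by (rule Lim_transform_eventually)
  moreover have "(g \<longlongrightarrow> g z) (at z)"
    using assms(2) by (simp add: isCont_def)
  ultimately show ?thesis
    by (rule tendsto_unique[OF at_neq_bot])
qed

lemma monic_poly_eq_if_norm_poly_eq:
  fixes p q :: "complex poly"
  assumes "lead_coeff p = 1" "lead_coeff q = 1" "\<And>z. norm (poly p z) = norm (poly q z)"
  shows "p = q"
  using assms
proof (induction "degree p" arbitrary: p q)
  case 0
  then have "p = 1"
    by (metis degree_0_id one_pCons)
  with 0 have "poly q z \<noteq> 0" for z
    by (metis norm_eq_zero norm_one one_neq_zero poly_1)
  then have "degree q = 0"
    using fundamental_theorem_of_algebra constant_degree by blast
  with 0 have "q = 1"
    by (metis degree_0_id one_pCons)
  with \<open>p = 1\<close> show ?case by simp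
next
  case (Suc n)
  obtain z0 where "poly p z0 = 0"
    using fundamental_theorem_of_algebra constant_degree Suc.hyps(2) by (metis nat.distinct(1))
  moreover from this have "poly q z0 = 0"
    using Suc.prems(3) by (metis norm_eq_zero)
  ultimately obtain p1 q1 where p1: "p = [:-z0, 1:] * p1" and q1: "q = [:-z0, 1:] * q1"
    by (metis poly_eq_0_iff_dvd dvdE)
  have lead: "lead_coeff p1 = 1" "lead_coeff q1 = 1"
    using Suc.prems(1,2) unfolding p1 q1 lead_coeff_mult by simp_all
  have "n = degree p1"
    using Suc.hyps(2) lead unfolding p1 by (subst (asm) degree_mult_eq) auto
  moreover have "norm (poly p1 z) = norm (poly q1 z)" for z
  proof (rule continuous_eq_off_finite
      [where f = "\<lambda>z. norm (poly p1 z)" and g = "\<lambda>z. norm (poly q1 z)" and S = "{z0}"])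
    fix w assume "w \<notin> {z0}"
    have "poly p w = (w - z0) * poly p1 w" "poly q w = (w - z0) * poly q1 w"
      by (simp_all add: p1 q1 algebra_simps)
    with \<open>w \<notin> {z0}\<close> show "norm (poly p1 w) = norm (poly q1 w)"
      using Suc.prems(3)[of w] by (simp add: norm_mult)
  qed (auto intro!: continuous_intros)
  ultimately show ?case
    using Suc.hyps(1) lead p1 q1 by metis
qed

definition cinner :: "complex^'n \<Rightarrow> complex^'n \<Rightarrow> complex" where
  "cinner x y = (\<Sum>i\<in>UNIV. cnj (x$i) * y$i)"

lemma cinner_add_left: "cinner (x + y) z = cinner x z + cinner y z"
  by (simp add: cinner_def distrib_right sum.distrib)

lemma cinner_add_right: "cinner x (y + z) = cinner x y + cinner x z"
  by (simp add: cinner_def distrib_left sum.distrib)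

lemma cinner_diff_right: "cinner x (y - z) = cinner x y - cinner x z"
  by (simp add: cinner_def right_diff_distrib sum_subtractf)

lemma cinner_scale_left: "cinner (c *s x) y = cnj c * cinner x y"
  by (simp add: cinner_def sum_distrib_left mult.assoc)

lemma cinner_scale_right: "cinner x (c *s y) = c * cinner x y"
  by (simp add: cinner_def sum_distrib_left mult.left_commute)

lemma cinner_commute: "cinner y x = cnj (cinner x y)"
  by (simp add: cinner_def mult.commute)

lemma cnj_mult_self: "cnj z * z = of_real ((norm z)\<^sup>2)"
  using complex_norm_square[of z] by (simp add: mult.commute)

lemma cinner_self: "cinner x x = of_real ((norm x)\<^sup>2)"
  by (simp add: cinner_def norm_vec_def L2_set_def sum_nonneg cnj_mult_self)

lemma Re_cinner: "Re (cinner x y) = inner x y"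
  by (simp add: cinner_def inner_vec_def inner_complex_def Re_sum)

lemma norm_smult_vec: "norm (c *s x) = norm c * norm (x :: complex^'n)"
proof -
  have "complex_of_real ((norm (c *s x))\<^sup>2) = cnj c * c * cinner x x"
    unfolding cinner_self[symmetric] by (simp add: cinner_scale_left cinner_scale_right)
  also have "\<dots> = complex_of_real ((norm c * norm x)\<^sup>2)"
    by (simp add: cinner_self cnj_mult_self power_mult_distrib)
  finally have "(norm (c *s x))\<^sup>2 = (norm c * norm x)\<^sup>2"
    by (simp only: of_real_eq_iff)
  then show ?thesis
    by (simp add: power2_eq_iff_nonneg)
qed

lemma norm_diff_power2:
  "(norm (x - y))\<^sup>2 = (norm x)\<^sup>2 - 2 * Re (cinner x y) + (norm (y :: complex^'n))\<^sup>2"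
  by (simp add: Re_cinner power2_norm_eq_inner inner_diff_left inner_diff_right inner_commute)

lemma norm_add_scaleR_power2:
  fixes u w :: "'a::real_inner"
  shows "(norm (u + t *\<^sub>R w))\<^sup>2 = (norm u)\<^sup>2 + 2 * t * inner u w + t\<^sup>2 * (norm w)\<^sup>2"
  by (simp only: power2_norm_eq_inner)
    (simp add: inner_add_left inner_add_right inner_commute algebra_simps power2_eq_square)

lemma matrix_vector_mult_smult:
  fixes A :: "'a::comm_semiring_1^'n^'m"
  shows "A *v (c *s x) = c *s (A *v x)"
  by (simp add: vec_eq_iff matrix_vector_mult_def sum_distrib_left mult.left_commute)

lemma matrix_vector_mult_scaleR_complex: "A *v (c *\<^sub>R x) = c *\<^sub>R (A *v (x :: complex^'n))"
  unfolding vec_eq_iff vector_scaleR_component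
  by (simp add: matrix_vector_mult_def scaleR_sum_right)

lemma matrix_eq_0_if_cinner_self_eq_0:
  fixes B :: "complex^'n^'n"
  assumes "\<And>x. cinner x (B *v x) = 0"
  shows "B = 0"
proof -
  have polar: "cinner x (B *v y) + cinner y (B *v x) = 0" for x y
    using assms[of "x + y"] assms[of x] assms[of y]
    by (simp add: matrix_vector_right_distrib cinner_add_left cinner_add_right add.commute)
  have "cinner x (B *v y) = 0" for x y
    using polar[of x y] polar[of "\<i> *s x" y]
    by (simp add: matrix_vector_mult_smult cinner_scale_left cinner_scale_right algebra_simps)
  then have "B *v y = 0" for y
    using cinner_self[of "B *v y"] by simp
  then show ?thesis by (simp add: matrix_eq)
qed

lemma invertible_iff_kernel_trivial:
  "invertible (A::'a::field^'n^'n) \<longleftrightarrow> (\<forall>x. A *v x = 0 \<longrightarrow> x = 0)"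
  by (simp add: invertible_left_inverse matrix_left_invertible_ker)

lemma matrix_inv_inverse:
  assumes "invertible (M::'a::semiring_1^'n^'n)"
  shows "M ** matrix_inv M = mat 1" and "matrix_inv M ** M = mat 1"
  using someI_ex[OF assms[unfolded invertible_def]] by (simp_all add: matrix_inv_def)

section \<open>Characteristic polynomials of 3x3 matrices\<close>

definition principal_minor_sum :: "'a::comm_ring_1^3^3 \<Rightarrow> 'a" where
  "principal_minor_sum T = T$1$1 * T$2$2 - T$1$2 * T$2$1 + T$1$1 * T$3$3 - T$1$3 * T$3$1
     + T$2$2 * T$3$3 - T$2$3 * T$3$2"

lemma scalar_mat_mult_vector: "scalar_mat z *v v = z *s v"
proof -
  have "(if i = j then z else 0) * v$j = (if i = j then z * v$j else 0)" for i j :: 3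
    by simp
  then show ?thesis
    by (simp add: vec_eq_iff matrix_vector_mult_def scalar_mat_def)
qed

lemma scalar_mat_sub_mult_vector: "(scalar_mat z - T) *v v = z *s v - T *v v"
  by (simp add: matrix_vector_mult_diff_rdistrib scalar_mat_mult_vector)

lemma trace_scalar_mat: "trace (scalar_mat z) = 3 * z"
  by (simp add: trace_def scalar_mat_def sum_3)

lemma det_scalar_mat_sub:
  "det (scalar_mat z - T) = z^3 - trace T * z\<^sup>2 + principal_minor_sum T * z - det T"
  unfolding det_3[of "scalar_mat z - T"] det_3[of T]
  by (simp add: scalar_mat_def trace_def sum_3 principal_minor_sum_def power3_eq_cube
      power2_eq_square algebra_simps)

lemma poly_char_poly3: "poly (char_poly3 T) z = det (scalar_mat z - T)"
  unfolding char_poly3_def det_3 scalar_mat_def by (simp add: algebra_simps)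

lemma char_poly3_eq: "char_poly3 T = [:- det T, principal_minor_sum T, - trace T, 1:]"
  by (simp add: fun_eq_iff poly_char_poly3 det_scalar_mat_sub power3_eq_cube power2_eq_square
      algebra_simps flip: poly_eq_poly_eq_iff)

lemma lead_coeff_char_poly3 [simp]: "lead_coeff (char_poly3 T) = 1"
  and degree_char_poly3 [simp]: "degree (char_poly3 T) = 3"
  and char_poly3_nonzero [simp]: "char_poly3 T \<noteq> 0"
  by (simp_all add: char_poly3_eq)

lemma char_poly3_eq_iff_det_eq:
  "char_poly3 A = char_poly3 B \<longleftrightarrow> (\<forall>z. det (scalar_mat z - A) = det (scalar_mat z - B))"
  by (simp add: fun_eq_iff flip: poly_eq_poly_eq_iff poly_char_poly3)

lemma char_poly3_eq_iff_proots_eq: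
  "char_poly3 S = char_poly3 T \<longleftrightarrow> proots (char_poly3 S) = proots (char_poly3 T)"
  by (metis complex_poly_decompose_multiset lead_coeff_char_poly3)

lemma char_poly3_root_iff_eigenvector:
  "poly (char_poly3 T) l = 0 \<longleftrightarrow> (\<exists>v. v \<noteq> 0 \<and> T *v v = l *s v)"
proof -
  have "poly (char_poly3 T) l = 0 \<longleftrightarrow> \<not> invertible (scalar_mat l - T)"
    by (simp add: poly_char_poly3 invertible_det_nz)
  also have "\<dots> \<longleftrightarrow> (\<exists>v. v \<noteq> 0 \<and> T *v v = l *s v)"
    by (auto simp: invertible_iff_kernel_trivial scalar_mat_sub_mult_vector) metis
  finally show ?thesis .
qed

lemma principal_minor_sum_diff_if_common_root:
  fixes S T :: cmat3
  assumes "poly (char_poly3 S) m = 0" "poly (char_poly3 T) m = 0" "det S = det T" "m \<noteq> 0"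
  shows "principal_minor_sum S - principal_minor_sum T = m * (trace S - trace T)"
proof -
  have "m * (principal_minor_sum S - principal_minor_sum T - m * (trace S - trace T)) = 0"
    using assms(1-3) unfolding char_poly3_eq poly_pCons poly_0 by algebra
  with assms(4) show ?thesis by simp
qed

section \<open>The Gram matrix and its least eigenvalue\<close>

definition gram_mat :: "cmat3 \<Rightarrow> cmat3" where
  "gram_mat M = adjoint_mat M ** M"

lemma cinner_adjoint_mat: "cinner x (adjoint_mat M *v y) = cinner (M *v x) y"
proof -
  have "cinner x (adjoint_mat M *v y) = (\<Sum>i\<in>UNIV. \<Sum>k\<in>UNIV. cnj (M$k$i * x$i) * y$k)"
    by (simp add: cinner_def adjoint_mat_def matrix_vector_mult_def sum_distrib_left mult_ac)
  also have "\<dots> = (\<Sum>k\<in>UNIV. \<Sum>i\<in>UNIV. cnj (M$k$i * x$i) * y$k)"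
    by (rule sum.swap)
  also have "\<dots> = cinner (M *v x) y"
    by (simp add: cinner_def matrix_vector_mult_def sum_distrib_right)
  finally show ?thesis .
qed

lemma cinner_gram_mat: "cinner x (gram_mat M *v y) = cinner (M *v x) (M *v y)"
  by (simp add: gram_mat_def cinner_adjoint_mat flip: matrix_vector_mul_assoc)

lemma det_adjoint_mat: "det (adjoint_mat M) = cnj (det M)"
  unfolding det_3 adjoint_mat_def by simp

lemma det_gram_mat: "det (gram_mat M) = of_real ((norm (det M))\<^sup>2)"
  by (simp add: gram_mat_def det_mul det_adjoint_mat cnj_mult_self)

lemma trace_gram_mat_scalar_sub:
  "trace (gram_mat (scalar_mat z - A))
     = 3 * (cnj z * z) - cnj z * trace A - z * cnj (trace A) + trace (gram_mat A)"
  by (simp add: gram_mat_def trace_def matrix_matrix_mult_def adjoint_mat_def scalar_mat_def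
      sum_3 algebra_simps)

lemma gram_eigenvalue_eq_rayleigh:
  assumes "v \<noteq> 0" "gram_mat M *v v = l *s v"
  shows "l = of_real ((norm (M *v v))\<^sup>2 / (norm v)\<^sup>2)"
proof -
  have "l * of_real ((norm v)\<^sup>2) = of_real ((norm (M *v v))\<^sup>2)"
    using cinner_gram_mat[of v M v] assms(2) by (simp add: cinner_scale_right cinner_self)
  with assms(1) show ?thesis
    by (simp add: field_simps)
qed

lemma gram_char_poly_root_eq_rayleigh:
  assumes "l \<in># proots (char_poly3 (gram_mat M))"
  obtains v where "v \<noteq> 0" "l = of_real ((norm (M *v v))\<^sup>2 / (norm v)\<^sup>2)"
  using assms gram_eigenvalue_eq_rayleigh by (auto simp: char_poly3_root_iff_eigenvector)

lemma gram_char_poly_roots_real: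
  "image_mset complex_of_real (image_mset Re (proots (char_poly3 (gram_mat M))))
     = proots (char_poly3 (gram_mat M))"
proof -
  have "image_mset (\<lambda>l. complex_of_real (Re l)) (proots (char_poly3 (gram_mat M)))
      = image_mset id (proots (char_poly3 (gram_mat M)))"
    by (rule image_mset_cong) (metis gram_char_poly_root_eq_rayleigh Re_complex_of_real id_apply)
  then show ?thesis
    by (simp add: multiset.map_comp comp_def)
qed

lemma gram_eigenvector_if_rayleigh_min:
  fixes M :: cmat3
  assumes min: "\<And>y. m * (norm y)\<^sup>2 \<le> (norm (M *v y))\<^sup>2"
    and x0: "(norm (M *v x0))\<^sup>2 = m * (norm x0)\<^sup>2"
  shows "gram_mat M *v x0 = of_real m *s x0"
proof -
  \<comment> \<open>first variation of \<open>\<parallel>M x\<parallel>\<^sup>2 - m \<parallel>x\<parallel>\<^sup>2 \<ge> 0\<close> at its zero \<open>x0\<close>\<close>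
  have "inner (M *v x0) (M *v y) - m * inner x0 y = 0" for y
  proof (rule linear_coeff_eq_0_if_quadratic_nonneg)
    fix t :: real
    have "m * (norm (x0 + t *\<^sub>R y))\<^sup>2 \<le> (norm (M *v (x0 + t *\<^sub>R y)))\<^sup>2"
      by (rule min)
    then show "0 \<le> 2 * t * (inner (M *v x0) (M *v y) - m * inner x0 y)
                   + t\<^sup>2 * ((norm (M *v y))\<^sup>2 - m * (norm y)\<^sup>2)"
      using x0 by (simp add: matrix_vector_right_distrib matrix_vector_mult_scaleR_complex
          norm_add_scaleR_power2 algebra_simps)
  qed
  then have Re_eq: "Re (cinner (M *v x0) (M *v y)) = m * Re (cinner x0 y)" for y
    by (simp add: Re_cinner)
  have cinner_eq: "cinner (M *v x0) (M *v y) = of_real m * cinner x0 y" for y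
    using Re_eq[of y] Re_eq[of "\<i> *s y"]
    by (simp add: complex_eq_iff cinner_scale_right matrix_vector_mult_smult)
  have "cinner y (gram_mat M *v x0) = of_real m * cinner y x0" for y
  proof -
    have "cinner y (gram_mat M *v x0) = cnj (cinner (M *v x0) (M *v y))"
      by (metis cinner_commute cinner_gram_mat)
    also have "\<dots> = of_real m * cinner y x0"
      by (simp add: cinner_eq cinner_commute[of y x0])
    finally show ?thesis .
  qed
  then have "cinner y (gram_mat M *v x0 - of_real m *s x0) = 0" for y
    by (simp add: cinner_diff_right cinner_scale_right)
  from this[of "gram_mat M *v x0 - of_real m *s x0"] show ?thesis
    by (simp add: cinner_self)
qed

lemma rayleigh_minimizer_exists:
  fixes M :: "complex^'n^'m"
  obtains x0 where "norm x0 = 1" "\<And>y. (norm (M *v x0))\<^sup>2 * (norm y)\<^sup>2 \<le> (norm (M *v y))\<^sup>2"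
proof -
  have "continuous_on (sphere 0 1) (\<lambda>x::complex^'n. (norm (M *v x))\<^sup>2)"
    by (intro continuous_intros linear_continuous_on matrix_vector_mul_bounded_linear)
  moreover have "compact (sphere (0::complex^'n) 1)" "sphere (0::complex^'n) 1 \<noteq> {}"
    by simp_all
  ultimately obtain x0 where x0: "x0 \<in> sphere 0 1"
    and x0_min: "\<forall>x\<in>sphere 0 1. (norm (M *v x0))\<^sup>2 \<le> (norm (M *v x))\<^sup>2"
    using continuous_attains_inf by blast
  have "(norm (M *v x0))\<^sup>2 * (norm y)\<^sup>2 \<le> (norm (M *v y))\<^sup>2" for y
  proof (cases "y = 0")
    case False
    have "(norm (M *v x0))\<^sup>2 \<le> (norm (M *v ((1 / norm y) *\<^sub>R y)))\<^sup>2"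
      using x0_min False by simp
    with False show ?thesis
      by (simp add: matrix_vector_mult_scaleR_complex power_divide field_simps)
  qed simp
  with x0 show ?thesis
    using that by simp
qed

(* s_3(M)^2, the square of the least singular value *)
definition min_gram_eigenvalue :: "cmat3 \<Rightarrow> real" where
  "min_gram_eigenvalue M = Min (Re ` set_mset (proots (char_poly3 (gram_mat M))))"

lemma min_gram_eigenvalue_rayleigh:
  fixes M :: cmat3
  obtains x0 where "norm x0 = 1" "(norm (M *v x0))\<^sup>2 = min_gram_eigenvalue M"
    "\<And>y. min_gram_eigenvalue M * (norm y)\<^sup>2 \<le> (norm (M *v y))\<^sup>2"
    "poly (char_poly3 (gram_mat M)) (of_real (min_gram_eigenvalue M)) = 0"
proof -
  let ?R = "Re ` set_mset (proots (char_poly3 (gram_mat M)))"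
  obtain x0 where x0: "norm x0 = 1"
    and low: "\<And>y. (norm (M *v x0))\<^sup>2 * (norm y)\<^sup>2 \<le> (norm (M *v y))\<^sup>2"
    using rayleigh_minimizer_exists[of M] by blast
  define m where "m = (norm (M *v x0))\<^sup>2"
  note low = low[folded m_def]
  have "gram_mat M *v x0 = of_real m *s x0"
    using x0 by (intro gram_eigenvector_if_rayleigh_min[OF low]) (simp add: m_def)
  with x0 have root: "poly (char_poly3 (gram_mat M)) (of_real m) = 0"
    unfolding char_poly3_root_iff_eigenvector by (auto intro!: exI[of _ x0])
  then have "complex_of_real m \<in># proots (char_poly3 (gram_mat M))"
    by simp
  then have "m \<in> ?R"
    by (rule rev_image_eqI) simp
  have fin: "finite ?R"
    by (intro finite_imageI finite_set_mset)
  have "min_gram_eigenvalue M = m"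
  proof (rule antisym)
    show "min_gram_eigenvalue M \<le> m"
      unfolding min_gram_eigenvalue_def using fin \<open>m \<in> ?R\<close> by (rule Min_le)
    have "m \<le> Re l" if l: "l \<in># proots (char_poly3 (gram_mat M))" for l
    proof -
      obtain v where "v \<noteq> 0" "l = of_real ((norm (M *v v))\<^sup>2 / (norm v)\<^sup>2)"
        using l by (rule gram_char_poly_root_eq_rayleigh)
      then have "Re l = (norm (M *v v))\<^sup>2 / (norm v)\<^sup>2"
        by simp
      then show ?thesis
        using low[of v] \<open>v \<noteq> 0\<close> by (simp add: pos_le_divide_eq)
    qed
    then show "m \<le> min_gram_eigenvalue M"
      unfolding min_gram_eigenvalue_def using \<open>m \<in> ?R\<close> by (intro Min.boundedI[OF fin]) auto
  qed
  then show ?thesis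
    using that x0 low root by (simp add: m_def)
qed

lemma min_gram_eigenvalue_le: "min_gram_eigenvalue M * (norm x)\<^sup>2 \<le> (norm (M *v x))\<^sup>2"
  by (metis min_gram_eigenvalue_rayleigh)

lemma min_gram_eigenvalue_attained:
  obtains x where "norm x = 1" "(norm (M *v x))\<^sup>2 = min_gram_eigenvalue M"
  by (metis min_gram_eigenvalue_rayleigh)

lemma min_gram_eigenvalue_root:
  "poly (char_poly3 (gram_mat M)) (of_real (min_gram_eigenvalue M)) = 0"
  by (metis min_gram_eigenvalue_rayleigh)

lemma min_gram_eigenvalue_nonneg: "0 \<le> min_gram_eigenvalue M"
  by (metis min_gram_eigenvalue_attained zero_le_power2)

lemma invertible_iff_min_gram_eigenvalue_pos: "invertible M \<longleftrightarrow> 0 < min_gram_eigenvalue M"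
proof
  assume "invertible M"
  obtain x where x: "norm x = 1" "(norm (M *v x))\<^sup>2 = min_gram_eigenvalue M"
    by (rule min_gram_eigenvalue_attained)
  with \<open>invertible M\<close> have "M *v x \<noteq> 0"
    by (auto simp: invertible_iff_kernel_trivial)
  with x(2) show "0 < min_gram_eigenvalue M"
    by (metis norm_eq_zero zero_less_power2)
next
  assume pos: "0 < min_gram_eigenvalue M"
  show "invertible M"
    unfolding invertible_iff_kernel_trivial
  proof (intro allI impI)
    fix x assume "M *v x = 0"
    then have "min_gram_eigenvalue M * (norm x)\<^sup>2 \<le> 0"
      using min_gram_eigenvalue_le[of M x] by simp
    with pos show "x = 0"
      by (simp add: mult_le_0_iff)
  qed
qed

lemma spec_norm_nonneg: "0 \<le> spec_norm A"
  unfolding spec_norm_def by (intro onorm_pos_le matrix_vector_mul_bounded_linear)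

lemma norm_matrix_vector_mult_le: "norm (A *v x) \<le> spec_norm A * norm x"
  unfolding spec_norm_def by (rule onorm[OF matrix_vector_mul_bounded_linear])

lemma min_gram_eigenvalue_scalar_mat_sub_ge:
  assumes "spec_norm A \<le> norm z"
  shows "(norm z - spec_norm A)\<^sup>2 \<le> min_gram_eigenvalue (scalar_mat z - A)"
proof -
  obtain x where x: "norm x = 1"
    "(norm ((scalar_mat z - A) *v x))\<^sup>2 = min_gram_eigenvalue (scalar_mat z - A)"
    by (rule min_gram_eigenvalue_attained)
  have "norm z - spec_norm A \<le> norm ((scalar_mat z - A) *v x)"
    using norm_triangle_ineq2[of "z *s x" "A *v x"] norm_matrix_vector_mult_le[of A x] x(1)
    by (simp add: scalar_mat_sub_mult_vector norm_smult_vec)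
  with assms show ?thesis
    unfolding x(2)[symmetric] by (intro power_mono) simp_all
qed

lemma min_gram_eigenvalue_scalar_mat_sub_le:
  "min_gram_eigenvalue (scalar_mat z - A) \<le> (norm z + spec_norm A)\<^sup>2"
proof -
  let ?e = "axis 1 1 :: complex^3"
  have "norm ((scalar_mat z - A) *v ?e) \<le> norm z + spec_norm A"
    using norm_triangle_ineq4[of "z *s ?e" "A *v ?e"] norm_matrix_vector_mult_le[of A ?e]
    by (simp add: scalar_mat_sub_mult_vector norm_smult_vec)
  then have "(norm ((scalar_mat z - A) *v ?e))\<^sup>2 \<le> (norm z + spec_norm A)\<^sup>2"
    by (intro power_mono) simp_all
  then show ?thesis
    using min_gram_eigenvalue_le[of "scalar_mat z - A" ?e] by simp
qed

section \<open>Resolvent norms and singular values\<close>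

lemma spec_norm_matrix_inv:
  assumes "invertible M"
  shows "spec_norm (matrix_inv M) = 1 / sqrt (min_gram_eigenvalue M)"
proof -
  let ?N = "matrix_inv M" and ?s = "sqrt (min_gram_eigenvalue M)"
  have s: "0 < ?s"
    using assms by (simp add: invertible_iff_min_gram_eigenvalue_pos)
  have "norm (?N *v y) \<le> 1 / ?s * norm y" for y
  proof -
    have "M *v (?N *v y) = y"
      by (simp add: matrix_vector_mul_assoc matrix_inv_inverse[OF assms])
    then have "(?s * norm (?N *v y))\<^sup>2 \<le> (norm y)\<^sup>2"
      using min_gram_eigenvalue_le[of M "?N *v y"] min_gram_eigenvalue_nonneg[of M]
      by (simp add: power_mult_distrib)
    then have "?s * norm (?N *v y) \<le> norm y"
      by (rule power2_le_imp_le) simp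
    with s show ?thesis
      by (simp add: field_simps)
  qed
  then have "spec_norm ?N \<le> 1 / ?s"
    unfolding spec_norm_def by (rule onorm_le)
  moreover have "1 / ?s \<le> spec_norm ?N"
  proof -
    obtain x where x: "norm x = 1" "(norm (M *v x))\<^sup>2 = min_gram_eigenvalue M"
      by (rule min_gram_eigenvalue_attained)
    have "?N *v (M *v x) = x"
      by (simp add: matrix_vector_mul_assoc matrix_inv_inverse[OF assms])
    then have "1 \<le> spec_norm ?N * norm (M *v x)"
      using norm_matrix_vector_mult_le[of ?N "M *v x"] x(1) by simp
    moreover have "norm (M *v x) = ?s"
      by (simp flip: x(2))
    ultimately show ?thesis
      using s by (simp add: field_simps)
  qed
  ultimately show ?thesis by simp
qed

lemma resolvent_norm_eq_min_gram_eigenvalue: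
  "resolvent_norm T z = (if min_gram_eigenvalue (scalar_mat z - T) = 0 then \<infinity>
     else ereal (1 / sqrt (min_gram_eigenvalue (scalar_mat z - T))))"
  using min_gram_eigenvalue_nonneg[of "scalar_mat z - T"]
    invertible_iff_min_gram_eigenvalue_pos[of "scalar_mat z - T"]
  by (auto simp: resolvent_norm_def spec_norm_matrix_inv)

lemma resolvent_norm_eq_iff:
  "resolvent_norm A z = resolvent_norm B z
     \<longleftrightarrow> min_gram_eigenvalue (scalar_mat z - A) = min_gram_eigenvalue (scalar_mat z - B)"
  using min_gram_eigenvalue_nonneg[of "scalar_mat z - A"] min_gram_eigenvalue_nonneg[of "scalar_mat z - B"]
  by (auto simp: resolvent_norm_eq_min_gram_eigenvalue)

lemma singular_values_eq_iff:
  "(\<forall>k\<in>{1,2,3}. singular_value M k = singular_value N k)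
     \<longleftrightarrow> char_poly3 (gram_mat M) = char_poly3 (gram_mat N)"
  (is "?sv \<longleftrightarrow> _")
proof -
  define ev where "ev M = sorted_list_of_multiset (image_mset Re (proots (char_poly3 (gram_mat M))))"
    for M
  have sv: "singular_value M k = sqrt (rev (ev M) ! (k - 1))" for M k
    by (simp add: singular_value_def ev_def gram_mat_def)
  have len: "length (ev M) = 3" for M
    unfolding ev_def
    by (metis mset_sorted_list_of_multiset size_mset size_image_mset size_proots_complex
        degree_char_poly3)
  have "?sv \<longleftrightarrow> rev (ev M) = rev (ev N)"
  proof
    assume ?sv
    have "rev (ev M) ! i = rev (ev N) ! i" if "i < 3" for i
    proof -
      from that have "Suc i \<in> {1,2,3}" by auto
      with \<open>?sv\<close> show ?thesis by (auto simp: sv)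
    qed
    then show "rev (ev M) = rev (ev N)"
      by (intro nth_equalityI) (simp_all add: len)
  qed (simp add: sv)
  also have "\<dots> \<longleftrightarrow> image_mset Re (proots (char_poly3 (gram_mat M)))
                    = image_mset Re (proots (char_poly3 (gram_mat N)))"
    unfolding ev_def rev_is_rev_conv by (metis mset_sorted_list_of_multiset)
  also have "\<dots> \<longleftrightarrow> proots (char_poly3 (gram_mat M)) = proots (char_poly3 (gram_mat N))"
    by (metis gram_char_poly_roots_real)
  also have "\<dots> \<longleftrightarrow> char_poly3 (gram_mat M) = char_poly3 (gram_mat N)"
    by (rule char_poly3_eq_iff_proots_eq[symmetric])
  finally show ?thesis .
qed

section \<open>Scalar matrices from polynomial least singular values\<close>

lemma polynomial_function_principal_minor_sum_gram:
  fixes F :: "'a::real_normed_vector \<Rightarrow> cmat3"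
  assumes "\<And>i j. polynomial_function (\<lambda>x. F x $ i $ j)"
  shows "polynomial_function (\<lambda>x. principal_minor_sum (gram_mat (F x)))"
proof -
  have "polynomial_function (\<lambda>x. gram_mat (F x) $ i $ j)" for i j
    unfolding gram_mat_def matrix_matrix_mult_def adjoint_mat_def
    by (auto intro!: polynomial_function_sum polynomial_function_complex_mult
        polynomial_function_cnj assms)
  then show ?thesis
    unfolding principal_minor_sum_def
    by (intro polynomial_function_add polynomial_function_diff polynomial_function_complex_mult)
qed

lemma polynomial_function_scalar_mat_sub:
  "polynomial_function (\<lambda>z. (scalar_mat z - A) $ i $ j)"
  by (cases "i = j") (auto simp: scalar_mat_def intro!: polynomial_function_diff)

lemma min_gram_eigenvalue_scalar_mat_sub_near_square:
  assumes "spec_norm A \<le> norm z"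
  shows "\<bar>min_gram_eigenvalue (scalar_mat z - A) - (norm z)\<^sup>2\<bar>
           \<le> 2 * spec_norm A * norm z + (spec_norm A)\<^sup>2"
proof -
  let ?a = "spec_norm A"
  have "(norm z - ?a)\<^sup>2 \<le> min_gram_eigenvalue (scalar_mat z - A)"
    using assms by (rule min_gram_eigenvalue_scalar_mat_sub_ge)
  moreover have "min_gram_eigenvalue (scalar_mat z - A) \<le> (norm z + ?a)\<^sup>2"
    by (rule min_gram_eigenvalue_scalar_mat_sub_le)
  moreover have "(norm z - ?a)\<^sup>2 = (norm z)\<^sup>2 - 2 * ?a * norm z + ?a\<^sup>2"
    "(norm z + ?a)\<^sup>2 = (norm z)\<^sup>2 + 2 * ?a * norm z + ?a\<^sup>2"
    by (simp_all add: power2_eq_square algebra_simps)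
  ultimately show ?thesis
    using zero_le_power2[of ?a] by (simp only: abs_le_iff) linarith
qed

lemma min_gram_eigenvalue_ray_quadratic:
  fixes A :: cmat3 and p :: "real \<Rightarrow> real"
  assumes w: "norm w = 1" and p: "polynomial_function p"
    and ray: "\<And>t. K < \<bar>t\<bar> \<Longrightarrow> min_gram_eigenvalue (scalar_mat (of_real t * w) - A) = p t"
  obtains c1 c0 K' where
    "\<And>t. K' < \<bar>t\<bar> \<Longrightarrow> min_gram_eigenvalue (scalar_mat (of_real t * w) - A) = t\<^sup>2 + c1 * t + c0"
proof -
  let ?a = "spec_norm A"
  define K' where "K' = max K ?a"
  have a: "0 \<le> ?a" "?a \<le> K'"
    by (simp_all add: spec_norm_nonneg K'_def)
  have near_square: "\<bar>p t - t\<^sup>2\<bar> \<le> 2 * ?a * \<bar>t\<bar> + ?a\<^sup>2" if "K' < \<bar>t\<bar>" for t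
    using min_gram_eigenvalue_scalar_mat_sub_near_square[of A "of_real t * w"] ray[of t] that w
    by (simp add: K'_def norm_mult)
  obtain P where P: "p = poly P"
    using p by (rule polynomial_function_imp_poly)
  define Q where "Q = P - [:0, 0, 1:]"
  have Q: "poly Q t = p t - t\<^sup>2" for t
    by (simp add: Q_def P power2_eq_square)
  have "degree Q \<le> 1"
  proof (rule degree_le_1_if_linear_bound)
    fix t assume t: "K' + 1 \<le> t"
    with a have "\<bar>poly Q t\<bar> \<le> 2 * ?a * t + ?a\<^sup>2"
      using near_square[of t] by (simp add: Q)
    moreover have "?a\<^sup>2 \<le> ?a\<^sup>2 * t"
      using t a by (simp add: mult_le_cancel_left1)
    moreover have "(2 * ?a + ?a\<^sup>2) * t + (2 * ?a + ?a\<^sup>2) = 2 * ?a * t + ?a\<^sup>2 * t + 2 * ?a + ?a\<^sup>2"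
      by (simp add: algebra_simps)
    ultimately show "\<bar>poly Q t\<bar> \<le> (2 * ?a + ?a\<^sup>2) * t + (2 * ?a + ?a\<^sup>2)"
      using a zero_le_power2[of ?a] by linarith
  qed
  then have "min_gram_eigenvalue (scalar_mat (of_real t * w) - A) = t\<^sup>2 + coeff Q 1 * t + coeff Q 0"
    if "K' < \<bar>t\<bar>" for t
    using poly_eq_if_degree_le_1[of Q t] Q[of t] ray[of t] that by (simp add: K'_def)
  then show ?thesis
    by (rule that)
qed

lemma Re_numerical_range_eq_if_ray_quadratic:
  fixes A :: cmat3
  assumes w: "norm w = 1"
    and ray: "\<And>t. K < \<bar>t\<bar> \<Longrightarrow> min_gram_eigenvalue (scalar_mat (of_real t * w) - A) = t\<^sup>2 + c1 * t + c0"
  shows "Re (cnj w * cinner x (A *v x)) = - c1 / 2 * (norm x)\<^sup>2"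
proof -
  let ?r = "Re (cnj w * cinner x (A *v x))" and ?M = "\<lambda>t. scalar_mat (complex_of_real t * w) - A"
  \<comment> \<open>compare \<open>s\<^sub>3\<^sup>2 \<parallel>x\<parallel>\<^sup>2 \<le> \<parallel>(t w - A) x\<parallel>\<^sup>2\<close> as \<open>t \<rightarrow> \<plusminus>\<infinity>\<close>\<close>
  have "t * (c1 * (norm x)\<^sup>2 + 2 * ?r) \<le> (norm (A *v x))\<^sup>2 - c0 * (norm x)\<^sup>2" if "K < \<bar>t\<bar>" for t
  proof -
    have "(t\<^sup>2 + c1 * t + c0) * (norm x)\<^sup>2 \<le> (norm (?M t *v x))\<^sup>2"
      using min_gram_eigenvalue_le[of "?M t" x] ray[OF that] by simp
    also have "\<dots> = t\<^sup>2 * (norm x)\<^sup>2 - 2 * t * ?r + (norm (A *v x))\<^sup>2"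
      using w by (simp add: scalar_mat_sub_mult_vector norm_diff_power2 norm_smult_vec norm_mult
          cinner_scale_left power_mult_distrib) (simp add: algebra_simps)
    finally show ?thesis
      by (simp add: algebra_simps)
  qed
  then have "c1 * (norm x)\<^sup>2 + 2 * ?r = 0"
    by (rule eq_0_if_mult_bounded_above)
  then show ?thesis
    by simp
qed

lemma Re_numerical_range_const_if_min_gram_eigenvalue_polynomial:
  fixes A :: cmat3 and f :: "complex \<Rightarrow> real"
  assumes f: "polynomial_function f"
    and eq: "\<And>z. 0 < min_gram_eigenvalue (scalar_mat z - A)
               \<Longrightarrow> min_gram_eigenvalue (scalar_mat z - A) = f z"
    and w: "norm w = 1"
  shows "\<exists>k. \<forall>x. Re (cnj w * cinner x (A *v x)) = k * (norm x)\<^sup>2"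
proof -
  have "polynomial_function (\<lambda>t. complex_of_real t * w)"
    by (intro polynomial_function_complex_mult polynomial_function_bounded_linear
        bounded_linear_of_real polynomial_function_const)
  then have "polynomial_function (\<lambda>t. f (of_real t * w))"
    using polynomial_function_compose[OF _ f] by (simp add: o_def)
  moreover have "min_gram_eigenvalue (scalar_mat (of_real t * w) - A) = f (of_real t * w)"
    if "spec_norm A < \<bar>t\<bar>" for t
  proof (rule eq)
    have "norm (of_real t * w) = \<bar>t\<bar>"
      using w by (simp add: norm_mult)
    with that have "0 < (norm (of_real t * w) - spec_norm A)\<^sup>2"
      by simp
    also have "\<dots> \<le> min_gram_eigenvalue (scalar_mat (of_real t * w) - A)"
      using that \<open>norm (of_real t * w) = \<bar>t\<bar>\<close>
      by (intro min_gram_eigenvalue_scalar_mat_sub_ge) simp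
    finally show "0 < min_gram_eigenvalue (scalar_mat (of_real t * w) - A)" .
  qed
  ultimately obtain c1 c0 K where
    "\<And>t. K < \<bar>t\<bar> \<Longrightarrow> min_gram_eigenvalue (scalar_mat (of_real t * w) - A) = t\<^sup>2 + c1 * t + c0"
    using min_gram_eigenvalue_ray_quadratic[OF w] by metis
  then show ?thesis
    using Re_numerical_range_eq_if_ray_quadratic[OF w] by blast
qed

lemma scalar_mat_if_min_gram_eigenvalue_polynomial:
  fixes A :: cmat3 and f :: "complex \<Rightarrow> real"
  assumes f: "polynomial_function f"
    and eq: "\<And>z. 0 < min_gram_eigenvalue (scalar_mat z - A)
               \<Longrightarrow> min_gram_eigenvalue (scalar_mat z - A) = f z"
  shows "\<exists>c. A = scalar_mat c"
proof -
  obtain k1 k2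
    where "\<And>x. Re (cinner x (A *v x)) = k1 * (norm x)\<^sup>2"
      and "\<And>x. Im (cinner x (A *v x)) = k2 * (norm x)\<^sup>2"
    using Re_numerical_range_const_if_min_gram_eigenvalue_polynomial[OF f eq, of 1]
      Re_numerical_range_const_if_min_gram_eigenvalue_polynomial[OF f eq, of \<i>]
    by auto
  then have "cinner x ((A - scalar_mat (Complex k1 k2)) *v x) = 0" for x
    by (simp add: matrix_vector_mult_diff_rdistrib cinner_diff_right scalar_mat_mult_vector
        cinner_scale_right cinner_self complex_eq_iff)
  then have "A - scalar_mat (Complex k1 k2) = 0"
    by (rule matrix_eq_0_if_cinner_self_eq_0)
  then show ?thesis
    by auto
qed

section \<open>Equal pseudospectra and super-identical pseudospectra\<close>

lemma principal_minor_sum_gram_diff: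
  fixes A B :: cmat3
  assumes cp: "char_poly3 A = char_poly3 B"
    and mu: "min_gram_eigenvalue (scalar_mat z - A) = min_gram_eigenvalue (scalar_mat z - B)"
    and pos: "0 < min_gram_eigenvalue (scalar_mat z - A)"
  shows "principal_minor_sum (gram_mat (scalar_mat z - A)) - principal_minor_sum (gram_mat (scalar_mat z - B))
           = of_real (min_gram_eigenvalue (scalar_mat z - A)) * (trace (gram_mat A) - trace (gram_mat B))"
proof -
  have "det (gram_mat (scalar_mat z - A)) = det (gram_mat (scalar_mat z - B))"
    using cp by (simp add: det_gram_mat char_poly3_eq_iff_det_eq)
  moreover have "trace (gram_mat (scalar_mat z - A)) - trace (gram_mat (scalar_mat z - B))
                   = trace (gram_mat A) - trace (gram_mat B)"
    using cp by (simp add: trace_gram_mat_scalar_sub char_poly3_eq)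
  ultimately show ?thesis
    using principal_minor_sum_diff_if_common_root[OF min_gram_eigenvalue_root
        min_gram_eigenvalue_root[of "scalar_mat z - B", folded mu]] pos
    by simp
qed

lemma trace_gram_mat_eq_if_min_gram_eigenvalue_eq:
  fixes A B :: cmat3
  assumes mu: "\<And>z. min_gram_eigenvalue (scalar_mat z - A) = min_gram_eigenvalue (scalar_mat z - B)"
    and cp: "char_poly3 A = char_poly3 B"
  shows "trace (gram_mat A) = trace (gram_mat B)"
proof (rule ccontr)
  define d where "d = trace (gram_mat A) - trace (gram_mat B)"
  assume "trace (gram_mat A) \<noteq> trace (gram_mat B)"
  then have "d \<noteq> 0"
    by (simp add: d_def)
  define f where "f z = Re ((principal_minor_sum (gram_mat (scalar_mat z - A))
                            - principal_minor_sum (gram_mat (scalar_mat z - B))) * inverse d)" for z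
  have f: "polynomial_function f"
    unfolding f_def
    by (intro polynomial_function_Re polynomial_function_complex_mult polynomial_function_diff
        polynomial_function_principal_minor_sum_gram polynomial_function_scalar_mat_sub
        polynomial_function_const)
  have f_eq: "min_gram_eigenvalue (scalar_mat z - A) = f z"
    if "0 < min_gram_eigenvalue (scalar_mat z - A)" for z
    using principal_minor_sum_gram_diff[OF cp mu that, folded d_def] \<open>d \<noteq> 0\<close>
    by (simp add: f_def mult.assoc)
  have "\<exists>a. A = scalar_mat a"
    using f f_eq by (rule scalar_mat_if_min_gram_eigenvalue_polynomial)
  moreover have "\<exists>b. B = scalar_mat b"
    using f f_eq[unfolded mu] by (rule scalar_mat_if_min_gram_eigenvalue_polynomial)
  ultimately have "A = B"
    using cp by (auto simp: char_poly3_eq trace_scalar_mat)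
  with \<open>d \<noteq> 0\<close> show False
    by (simp add: d_def)
qed

lemma gram_char_poly_eq_if_min_gram_eigenvalue_eq:
  fixes A B :: cmat3
  assumes mu: "\<And>z. min_gram_eigenvalue (scalar_mat z - A) = min_gram_eigenvalue (scalar_mat z - B)"
    and cp: "char_poly3 A = char_poly3 B"
  shows "char_poly3 (gram_mat (scalar_mat z - A)) = char_poly3 (gram_mat (scalar_mat z - B))"
proof -
  define g where "g z = principal_minor_sum (gram_mat (scalar_mat z - A))
                      - principal_minor_sum (gram_mat (scalar_mat z - B))" for z
  have tr: "trace (gram_mat A) = trace (gram_mat B)"
    using mu cp by (rule trace_gram_mat_eq_if_min_gram_eigenvalue_eq)
  have "g z = 0"
  proof (rule continuous_eq_off_finite
      [where f = g and g = "\<lambda>_. 0" and S = "{w. poly (char_poly3 A) w = 0}"])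
    show "isCont g z"
      unfolding g_def
      by (intro continuous_polymonial_function polynomial_function_diff
          polynomial_function_principal_minor_sum_gram polynomial_function_scalar_mat_sub)
    show "finite {w. poly (char_poly3 A) w = 0}"
      by (rule poly_roots_finite) simp
    fix w assume "w \<notin> {w. poly (char_poly3 A) w = 0}"
    then have "0 < min_gram_eigenvalue (scalar_mat w - A)"
      by (simp add: poly_char_poly3 invertible_det_nz flip: invertible_iff_min_gram_eigenvalue_pos)
    then show "g w = 0"
      using principal_minor_sum_gram_diff[OF cp mu] tr by (simp add: g_def)
  qed simp
  moreover have "det (gram_mat (scalar_mat z - A)) = det (gram_mat (scalar_mat z - B))"
    using cp by (simp add: det_gram_mat char_poly3_eq_iff_det_eq)
  moreover have "trace (gram_mat (scalar_mat z - A)) = trace (gram_mat (scalar_mat z - B))"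
    using cp tr by (simp add: trace_gram_mat_scalar_sub char_poly3_eq)
  ultimately show ?thesis
    by (simp add: char_poly3_eq g_def)
qed

lemma char_poly3_eq_if_gram_char_poly_eq:
  fixes A B :: cmat3
  assumes "\<And>z. char_poly3 (gram_mat (scalar_mat z - A)) = char_poly3 (gram_mat (scalar_mat z - B))"
  shows "char_poly3 A = char_poly3 B"
proof (rule monic_poly_eq_if_norm_poly_eq)
  fix z
  have "det (gram_mat (scalar_mat z - A)) = det (gram_mat (scalar_mat z - B))"
    using assms[of z] by (simp add: char_poly3_eq)
  then have "(norm (det (scalar_mat z - A)))\<^sup>2 = (norm (det (scalar_mat z - B)))\<^sup>2"
    by (simp only: det_gram_mat of_real_eq_iff)
  then show "norm (poly (char_poly3 A) z) = norm (poly (char_poly3 B) z)"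
    by (simp add: poly_char_poly3 power2_eq_iff_nonneg)
qed (rule lead_coeff_char_poly3)+

theorem theorem6:
  fixes A B :: "complex ^ 3 ^ 3"
  shows "((\<forall>z. resolvent_norm A z = resolvent_norm B z) \<and>
          (\<forall>z. det (scalar_mat z - A) = det (scalar_mat z - B)))
     \<longleftrightarrow> (\<forall>z. \<forall>k\<in>{1,2,3}. singular_value (scalar_mat z - A) k = singular_value (scalar_mat z - B) k)"
proof -
  have "(\<forall>z. min_gram_eigenvalue (scalar_mat z - A) = min_gram_eigenvalue (scalar_mat z - B))
          \<and> char_poly3 A = char_poly3 B
      \<longleftrightarrow> (\<forall>z. char_poly3 (gram_mat (scalar_mat z - A)) = char_poly3 (gram_mat (scalar_mat z - B)))"
  proof
    assume "(\<forall>z. min_gram_eigenvalue (scalar_mat z - A) = min_gram_eigenvalue (scalar_mat z - B))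
              \<and> char_poly3 A = char_poly3 B"
    then show "\<forall>z. char_poly3 (gram_mat (scalar_mat z - A)) = char_poly3 (gram_mat (scalar_mat z - B))"
      using gram_char_poly_eq_if_min_gram_eigenvalue_eq[of A B] by simp
  next
    assume gram: "\<forall>z. char_poly3 (gram_mat (scalar_mat z - A)) = char_poly3 (gram_mat (scalar_mat z - B))"
    then show "(\<forall>z. min_gram_eigenvalue (scalar_mat z - A) = min_gram_eigenvalue (scalar_mat z - B))
                 \<and> char_poly3 A = char_poly3 B"
      using char_poly3_eq_if_gram_char_poly_eq[of A B] by (simp add: min_gram_eigenvalue_def)
  qed
  then show ?thesis
    by (simp only: resolvent_norm_eq_iff singular_values_eq_iff flip: char_poly3_eq_iff_det_eq)
qed

end
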